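(* For every strategy profile $s$ with $S_0(s)\vee S_1(s)$: if $\mathsf{SAcBes}(s)$ then $\mathsf{SPE}(s)$.
   Context: Let $P=\{A,B\}$ and $\mathrm{Choice}=\{d,r\}$; a payoff function is $f:P\to\mathbb{R}$. Strategy profiles are elements of the final coalgebra of $X\mapsto\mathbb{R}^P+P\times\mathrm{Choice}\times X\times X$ (finite or infinite trees $\langle f\rangle$ or $\langle p,c,s_d,s_r\rangle$, equality being bisimilarity). The payoff $\widehat{s}$ is the partial function given by $\widehat{\langle f\rangle}=f$, $\widehat{\langle p,d,s_d,s_r\rangle}=\widehat{s_d}$, $\widehat{\langle p,r,s_d,s_r\rangle}=\widehat{s_r}$. Convergence $\downarrow$: least predicate with $\downarrow(s)$ iff $s=\langle f\rangle$, or $s=\langle p,d,s_d,s_r\rangle\wedge\downarrow(s_d)$, or $s=\langle p,r,s_d,s_r\rangle\wedge\downarrow(s_r)$. Strong convergence $\Downarrow$: greatest predicate with $\Downarrow(s)$ iff $s=\langle f\rangle$, or $s=\langle p,c,s_d,s_r\rangle$ with $\downarrow(s),\Downarrow(s_d),\Downarrow(s_r)$. For a predicate $\Phi$, $\Box\Phi$ is the greatest predicate such that $\Box\Phi(s)$ iff $\Phi(s)$ and, whenever $s=\langle p,c,s_d,s_r\rangle$, $\Box\Phi(s_d)$ and $\Box\Phi(s_r)$. $\mathsf{PE}(s)$ holds iff $\Downarrow(s)$ and (if $s=\langle p,d,s_d,s_r\rangle$ then $\widehat{s_d}(p)\ge\widehat{s_r}(p)$) and (if $s=\langle p,r,s_d,s_r\rangle$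 then $\widehat{s_r}(p)\ge\widehat{s_d}(p)$); subgame perfect equilibria are $\mathsf{SPE}=\Box\,\mathsf{PE}$. Let $f_{0,1}=(A\mapsto0,B\mapsto1)$, $f_{1,0}=(A\mapsto1,B\mapsto0)$. $S_0,S_1$ are the greatest predicates with $S_0(s)$ iff $s=\langle A,c,\langle f_{0,1}\rangle,s'\rangle$ with $S_1(s')$, and $S_1(s)$ iff $s=\langle B,c,\langle f_{1,0}\rangle,s'\rangle$ with $S_0(s')$. $\mathsf{AcBes}$ is the least predicate such that $\mathsf{AcBes}(s)$ holds iff: whenever $s=\langle p,c,\langle f\rangle,s'\rangle$, then ($p=A$, $f=f_{0,1}$, $c=r$, $\mathsf{AcBes}(s')$) or ($p=B$, $f=f_{1,0}$, and ($c=d$ or $\mathsf{AcBes}(s')$)). $\mathsf{SAcBes}=\Box\,\mathsf{AcBes}$. *)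

theory Defs
  imports Complex_Main
begin

datatype agent = A | B
datatype choice = cd | cr   (* cd = "d" (down), cr = "r" (right) *)

type_synonym payoff_fun = "agent \<Rightarrow> real"

(* final coalgebra of X \<mapsto> R^P + P \<times> Choice \<times> X \<times> X; HOL equality on a codatatype is bisimilarity *)
codatatype strat = Leaf payoff_fun | Node agent choice strat strat

partial_function (option) payoff :: "strat \<Rightarrow> payoff_fun option" where
  "payoff s = (case s of Leaf f \<Rightarrow> Some f
                | Node p c sd sr \<Rightarrow> (case c of cd \<Rightarrow> payoff sd | cr \<Rightarrow> payoff sr))"

inductive conv :: "strat \<Rightarrow> bool" where
  "(\<exists>f. s = Leaf f)
   \<or> (\<exists>p sd sr. s = Node p cd sd sr \<and> conv sd)
   \<or> (\<exists>p sd sr. s = Node p cr sd sr \<and> conv sr) \<Longrightarrow> conv s"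

coinductive sconv :: "strat \<Rightarrow> bool" where
  "(\<exists>f. s = Leaf f)
   \<or> (\<exists>p c sd sr. s = Node p c sd sr \<and> conv s \<and> sconv sd \<and> sconv sr) \<Longrightarrow> sconv s"

coinductive Box :: "(strat \<Rightarrow> bool) \<Rightarrow> strat \<Rightarrow> bool" for \<Phi> where
  "\<Phi> s \<Longrightarrow> (\<forall>p c sd sr. s = Node p c sd sr \<longrightarrow> Box \<Phi> sd \<and> Box \<Phi> sr) \<Longrightarrow> Box \<Phi> s"

definition PE :: "strat \<Rightarrow> bool" where
  "PE s \<longleftrightarrow> sconv s
     \<and> (\<forall>p sd sr. s = Node p cd sd sr \<longrightarrow> the (payoff sd) p \<ge> the (payoff sr) p)
     \<and> (\<forall>p sd sr. s = Node p cr sd sr \<longrightarrow> the (payoff sr) p \<ge> the (payoff sd) p)"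

definition SPE :: "strat \<Rightarrow> bool" where
  "SPE = Box PE"

definition f01 :: payoff_fun where "f01 = (\<lambda>x. case x of A \<Rightarrow> 0 | B \<Rightarrow> 1)"
definition f10 :: payoff_fun where "f10 = (\<lambda>x. case x of A \<Rightarrow> 1 | B \<Rightarrow> 0)"

coinductive S0 and S1 where
  "(\<exists>c s'. s = Node A c (Leaf f01) s' \<and> S1 s') \<Longrightarrow> S0 s"
| "(\<exists>c s'. s = Node B c (Leaf f10) s' \<and> S0 s') \<Longrightarrow> S1 s"

inductive AcBes :: "strat \<Rightarrow> bool" where
  "(\<forall>p c f s'. s = Node p c (Leaf f) s' \<longrightarrow>
      (p = A \<and> f = f01 \<and> c = cr \<and> AcBes s')
      \<or> (p = B \<and> f = f10 \<and> (c = cd \<or> AcBes s'))) \<Longrightarrow> AcBes s"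

definition SAcBes :: "strat \<Rightarrow> bool" where
  "SAcBes = Box AcBes"

end

theory Submission
  imports Defs
begin

text \<open>In a profile of the infinite 0,1-game, A stops with payoffs f01 and B stops with
payoffs f10. If A always continues and B eventually stops (AcBes), the profile converges
with outcome f10; as AcBes holds in every subgame, so does convergence. Then A, who gets 1
by continuing and 0 by stopping, has no reason to deviate, and B gets 0 either way.\<close>

lemma payoff_Leaf [simp]: "payoff (Leaf f) = Some f"
  by (subst payoff.simps) simp

lemma payoff_Node [simp]:
  "payoff (Node p c sd sr) = (case c of cd \<Rightarrow> payoff sd | cr \<Rightarrow> payoff sr)"
  by (subst payoff.simps) simp

lemma conv_Leaf: "conv (Leaf f)"
  by (rule conv.intros) simp

lemma conv_Node_cd: "conv sd \<Longrightarrow> conv (Node p cd sd sr)"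
  by (rule conv.intros) simp

lemma conv_Node_cr: "conv sr \<Longrightarrow> conv (Node p cr sd sr)"
  by (rule conv.intros) simp

lemma Box_NodeD: "Box \<Phi> (Node p c sd sr) \<Longrightarrow> \<Phi> (Node p c sd sr) \<and> Box \<Phi> sd \<and> Box \<Phi> sr"
  by (erule Box.cases) auto

lemma BoxD: "Box \<Phi> s \<Longrightarrow> \<Phi> s"
  by (erule Box.cases) simp

lemma Box_invariant:
  assumes "I s"
    and "\<And>t. I t \<Longrightarrow> \<Phi> t"
    and "\<And>p c sd sr. I (Node p c sd sr) \<Longrightarrow> I sd \<and> I sr"
  shows "Box \<Phi> s"
  using assms(1) by (coinduction arbitrary: s rule: Box.coinduct) (use assms(2,3) in blast)

lemma sconv_if_Box_conv: "Box conv s \<Longrightarrow> sconv s"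
proof (coinduction arbitrary: s rule: sconv.coinduct)
  case (sconv s)
  then show ?case
    by (cases s) (auto dest: Box_NodeD)
qed

definition comb :: "strat \<Rightarrow> bool" where
  "comb s \<longleftrightarrow> S0 s \<or> S1 s \<or> (\<exists>f. s = Leaf f)"

lemma S0_S1_cases:
  assumes "S0 s \<or> S1 s"
  obtains s' c where "s = Node A c (Leaf f01) s'" "S1 s'"
  | s' c where "s = Node B c (Leaf f10) s'" "S0 s'"
  using assms by (auto elim: S0.cases S1.cases)

lemma comb_Node: "comb (Node p c sd sr) \<Longrightarrow> comb sd \<and> comb sr"
  unfolding comb_def by (auto elim: S0.cases S1.cases)

lemma AcBes_Node_Leaf:
  "AcBes (Node p c (Leaf f) s') \<Longrightarrow>
     (p = A \<and> f = f01 \<and> c = cr \<and> AcBes s') \<or> (p = B \<and> f = f10 \<and> (c = cd \<or> AcBes s'))"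
  by (erule AcBes.cases) blast

lemma AcBes_conv_payoff_f10:
  "AcBes s \<Longrightarrow> S0 s \<or> S1 s \<Longrightarrow> conv s \<and> payoff s = Some f10"
proof (induction rule: AcBes.induct)
  case (1 s)
  note step = "1.IH"
  from \<open>S0 s \<or> S1 s\<close> show ?case
  proof (cases rule: S0_S1_cases)
    case (1 s' c)
    with step have "c = cr" "conv s' \<and> payoff s' = Some f10"
      by auto
    with 1 show ?thesis
      by (auto intro: conv_Node_cr)
  next
    case (2 s' c)
    show ?thesis
    proof (cases c)
      case cd
      with 2 show ?thesis
        by (auto intro: conv_Node_cd conv_Leaf)
    next
      case cr
      with 2 step have "conv s' \<and> payoff s' = Some f10"
        by auto
      with 2 cr show ?thesis
        by (auto intro: conv_Node_cr)
    qed
  qed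
qed

lemma conv_comb: "comb s \<Longrightarrow> AcBes s \<Longrightarrow> conv s"
  unfolding comb_def using AcBes_conv_payoff_f10 conv_Leaf by blast

lemma sconv_comb: "comb s \<Longrightarrow> Box AcBes s \<Longrightarrow> sconv s"
  by (rule sconv_if_Box_conv, rule Box_invariant[where I = "\<lambda>t. comb t \<and> Box AcBes t"])
    (auto dest: Box_NodeD comb_Node BoxD intro: conv_comb)

lemma PE_comb:
  assumes "comb s" and "Box AcBes s"
  shows "PE s"
proof (cases "\<exists>f. s = Leaf f")
  case True
  with assms show ?thesis
    unfolding PE_def using sconv_comb by auto
next
  case False
  with assms(1) obtain p c f s' where s: "s = Node p c (Leaf f) s'" and "S0 s' \<or> S1 s'"
    unfolding comb_def by (auto elim: S0.cases S1.cases)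
  with assms(2) have "AcBes s" "AcBes s'"
    by (auto dest: Box_NodeD BoxD)
  with \<open>S0 s' \<or> S1 s'\<close> have "payoff s' = Some f10"
    using AcBes_conv_payoff_f10 by blast
  moreover from \<open>AcBes s\<close> s
  have "(p = A \<and> f = f01 \<and> c = cr) \<or> (p = B \<and> f = f10)"
    by (auto dest: AcBes_Node_Leaf)
  ultimately show ?thesis
    unfolding PE_def using s sconv_comb[OF assms]
    by (cases c) (auto simp: f01_def f10_def)
qed

theorem mainTheorem9:
  fixes s :: strat
  assumes "S0 s \<or> S1 s"
    and "SAcBes s"
  shows "SPE s"
  unfolding SPE_def
proof (rule Box_invariant[where I = "\<lambda>t. comb t \<and> Box AcBes t"])
  show "comb s \<and> Box AcBes s"
    using assms unfolding comb_def SAcBes_def by blast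
qed (auto intro: PE_comb dest: comb_Node Box_NodeD)

end
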